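(* Let $\mathcal{A}$ and $\mathcal{B}$ be quantum automata over the same alphabet $\Sigma$ and $a,b\in\mathbb{C}$ with $|a|^2+|b|^2=1$. Then for every $w\in\Sigma^\omega$: (1) $|a|^2f^{\mathrm{ND}}_{\mathcal{A}}(w)+|b|^2f^{\mathrm{ND}}_{\mathcal{B}}(w)\ge f^{\mathrm{ND}}_{a\mathcal{A}\oplus b\mathcal{B}}(w)\ge\max\{|a|^2f^{\mathrm{ND}}_{\mathcal{A}}(w),|b|^2f^{\mathrm{ND}}_{\mathcal{B}}(w)\}\ge f^{\mathrm{ND}}_{a\mathcal{A}\oplus b\mathcal{B}}(w)/2$; (2) $f^{\mathrm{ND}}_{\mathcal{A}\otimes\mathcal{B}}(w)\le f^{\mathrm{ND}}_{\mathcal{A}}(w)f^{\mathrm{ND}}_{\mathcal{B}}(w)$; (3) $f^{\mathrm{ND}}_{\mathcal{A}}(w)+f^{\mathrm{ND}}_{\mathcal{A}^\perp}(w)\ge1$, with equality if and only if $\lim_{n\to\infty}f^{\mathrm{MO}}_{\mathcal{A}}(w_n)$ exists.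
   Context: A quantum automaton is a tuple $\mathcal{A}=(\mathcal{H},|s_0\rangle,\Sigma,\{U_\sigma:\sigma\in\Sigma\},F)$ where $\mathcal{H}$ is a finite-dimensional complex Hilbert space, $|s_0\rangle$ a unit vector, $\Sigma$ a finite alphabet, each $U_\sigma$ unitary, and $F$ a subspace with projection $P_F$. For finite $x=\sigma_1\cdots\sigma_m$, $U_x=U_{\sigma_m}\cdots U_{\sigma_1}$ and $f^{\mathrm{MO}}_{\mathcal{A}}(x)=\|P_FU_x|s_0\rangle\|^2$. For $w\in\Sigma^\omega$ with prefixes $w_n$, the non-disturbing run is $|s_n\rangle=U_{w_n}|s_0\rangle$ and $f^{\mathrm{ND}}_{\mathcal{A}}(w)=\sup_{|\psi\rangle}\sup_{\{n_i\}}\inf_{i\ge1}|\langle\psi|s_{n_i}\rangle|^2$ over unit $|\psi\rangle\in F$ and strictly increasing $0\le n_1<n_2<\cdots$. Operations, for $\mathcal{A}=(\mathcal{H}^{\mathcal{A}},|s_0^{\mathcal{A}}\rangle,\Sigma,\{U^{\mathcal{A}}_\sigma\},F^{\mathcal{A}})$ and $\mathcal{B}=(\mathcal{H}^{\mathcal{B}},|s_0^{\mathcal{B}}\rangle,\Sigma,\{U^{\mathcal{B}}_\sigma\},F^{\mathcal{B}})$: the weighted direct sum $a\mathcal{A}\oplus b\mathcal{B}=(\mathcal{H}^{\mathcal{A}}\oplus\mathcal{H}^{\mathcal{B}},a|s_0^{\mathcal{A}}\rangle\oplus b|s_0^{\mathcal{B}}\rangle,\Sigma,\{U^{\mathcal{A}}_\sigma\oplus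 U^{\mathcal{B}}_\sigma\},F^{\mathcal{A}}\oplus F^{\mathcal{B}})$; the tensor product $\mathcal{A}\otimes\mathcal{B}=(\mathcal{H}^{\mathcal{A}}\otimes\mathcal{H}^{\mathcal{B}},|s_0^{\mathcal{A}}\rangle\otimes|s_0^{\mathcal{B}}\rangle,\Sigma,\{U^{\mathcal{A}}_\sigma\otimes U^{\mathcal{B}}_\sigma\},F^{\mathcal{A}}\otimes F^{\mathcal{B}})$; the ortho-complement $\mathcal{A}^\perp$ is $\mathcal{A}$ with $F$ replaced by its orthogonal complement $F^\perp$. *)

theory Defs
  imports "HOL-Analysis.Analysis"
begin

text \<open>Finite-dimensional complex Hilbert spaces are modelled as the spaces
  of functions from a finite (nonempty) index type to the complex numbers,
  with the standard inner product; operators are matrices over the index type.\<close>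

type_synonym 'i cvec = "'i \<Rightarrow> complex"
type_synonym 'i cmat = "'i \<Rightarrow> 'i \<Rightarrow> complex"

definition cinner :: "'i::finite cvec \<Rightarrow> 'i cvec \<Rightarrow> complex" where
  "cinner u v = (\<Sum>i\<in>UNIV. cnj (u i) * v i)"

definition vnorm2 :: "'i::finite cvec \<Rightarrow> real" where
  "vnorm2 v = (\<Sum>i\<in>UNIV. (cmod (v i))^2)"

definition mapply :: "'i::finite cmat \<Rightarrow> 'i cvec \<Rightarrow> 'i cvec" where
  "mapply M v = (\<lambda>i. \<Sum>j\<in>UNIV. M i j * v j)"

definition mmult :: "'i::finite cmat \<Rightarrow> 'i cmat \<Rightarrow> 'i cmat" where
  "mmult M N = (\<lambda>i k. \<Sum>j\<in>UNIV. M i j * N j k)"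

definition adjoint :: "'i cmat \<Rightarrow> 'i cmat" where
  "adjoint M = (\<lambda>i j. cnj (M j i))"

definition idmat :: "'i cmat" where
  "idmat = (\<lambda>i j. if i = j then 1 else 0)"

definition unitary :: "'i::finite cmat \<Rightarrow> bool" where
  "unitary U \<longleftrightarrow> mmult (adjoint U) U = idmat \<and> mmult U (adjoint U) = idmat"

definition csubspace :: "'i cvec set \<Rightarrow> bool" where
  "csubspace F \<longleftrightarrow> (\<lambda>_. 0) \<in> F \<and> (\<forall>u\<in>F. \<forall>v\<in>F. (\<lambda>i. u i + v i) \<in> F)
      \<and> (\<forall>c u. u \<in> F \<longrightarrow> (\<lambda>i. c * u i) \<in> F)"

definition cspan :: "'i cvec set \<Rightarrow> 'i cvec set" where
  "cspan X = \<Inter>{S. csubspace S \<and> X \<subseteq> S}"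

definition orth_compl :: "'i::finite cvec set \<Rightarrow> 'i cvec set" where
  "orth_compl F = {v. \<forall>u\<in>F. cinner u v = 0}"

definition proj :: "'i::finite cvec set \<Rightarrow> 'i cvec \<Rightarrow> 'i cvec" where
  "proj F v = (THE p. p \<in> F \<and> (\<forall>u\<in>F. cinner u (\<lambda>i. v i - p i) = 0))"

record ('i, 's) qa =
  init :: "'i cvec"
  trans :: "'s \<Rightarrow> 'i cmat"
  acc :: "'i cvec set"

definition qa_wf :: "('i::finite, 's::finite) qa \<Rightarrow> bool" where
  "qa_wf A \<longleftrightarrow> vnorm2 (init A) = 1 \<and> (\<forall>\<sigma>. unitary (trans A \<sigma>)) \<and> csubspace (acc A)"

text \<open>U_x |s_0> for a finite word x = sigma_1 ... sigma_m (U_x = U_{sigma_m} ... U_{sigma_1}).\<close>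
definition state :: "('i::finite, 's) qa \<Rightarrow> 's list \<Rightarrow> 'i cvec" where
  "state A x = foldl (\<lambda>s \<sigma>. mapply (trans A \<sigma>) s) (init A) x"

definition f_MO :: "('i::finite, 's) qa \<Rightarrow> 's list \<Rightarrow> real" where
  "f_MO A x = vnorm2 (proj (acc A) (state A x))"

definition prefix :: "(nat \<Rightarrow> 's) \<Rightarrow> nat \<Rightarrow> 's list" where
  "prefix w n = map w [0..<n]"

definition run :: "('i::finite, 's) qa \<Rightarrow> (nat \<Rightarrow> 's) \<Rightarrow> nat \<Rightarrow> 'i cvec" where
  "run A w n = state A (prefix w n)"

text \<open>Non-disturbing value; the supremum over the empty set (trivial F) is taken to be 0.\<close>
definition f_ND :: "('i::finite, 's) qa \<Rightarrow> (nat \<Rightarrow> 's) \<Rightarrow> real" where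
  "f_ND A w = Sup (insert 0
     {Inf (range (\<lambda>i::nat. (cmod (cinner \<psi> (run A w (n i))))^2)) | \<psi> n.
        \<psi> \<in> acc A \<and> vnorm2 \<psi> = 1 \<and> strict_mono (n :: nat \<Rightarrow> nat)})"

definition wdsum :: "complex \<Rightarrow> ('i::finite, 's) qa \<Rightarrow> complex \<Rightarrow> ('j::finite, 's) qa
    \<Rightarrow> ('i + 'j, 's) qa" where
  "wdsum a A b B =
    \<lparr> init = case_sum (\<lambda>i. a * init A i) (\<lambda>j. b * init B j),
      trans = (\<lambda>\<sigma> x y. case (x, y) of
                 (Inl i, Inl i') \<Rightarrow> trans A \<sigma> i i'
               | (Inr j, Inr j') \<Rightarrow> trans B \<sigma> j j'
               | _ \<Rightarrow> 0),
      acc = {case_sum u v | u v. u \<in> acc A \<and> v \<in> acc B} \<rparr>"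

definition tprod :: "('i::finite, 's) qa \<Rightarrow> ('j::finite, 's) qa \<Rightarrow> ('i \<times> 'j, 's) qa" where
  "tprod A B =
    \<lparr> init = (\<lambda>(i, j). init A i * init B j),
      trans = (\<lambda>\<sigma> (i, j) (i', j'). trans A \<sigma> i i' * trans B \<sigma> j j'),
      acc = cspan {(\<lambda>(i, j). u i * v j) | u v. u \<in> acc A \<and> v \<in> acc B} \<rparr>"

definition qa_perp :: "('i::finite, 's) qa \<Rightarrow> ('i, 's) qa" where
  "qa_perp A = A \<lparr> acc := orth_compl (acc A) \<rparr>"

end

theory Submission
  imports Defs
begin

text \<open>A run of a quantum automaton stays on the unit sphere of a finite-dimensional
  space, so every subsequence of it has a convergent subsequence. The non-disturbing value
  with respect to a subspace \<open>F\<close> is the least upper bound of \<open>\<parallel>P\<^sub>F c\<parallel>\<^sup>2\<close> over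
  all limits \<open>c\<close> of convergent subsequences: along a subsequence, a unit test vector
  \<open>\<psi> \<in> F\<close> does no better than at a limit point \<open>c\<close> of it, where
  \<open>|\<langle>\<psi>, c\<rangle>|\<^sup>2 \<le> \<parallel>P\<^sub>F c\<parallel>\<^sup>2\<close>; conversely \<open>\<psi> = P\<^sub>F c / \<parallel>P\<^sub>F c\<parallel>\<close> attains
  \<open>\<parallel>P\<^sub>F c\<parallel>\<^sup>2\<close> in the limit along a subsequence converging to \<open>c\<close>.

  So all three statements are statements about single limit points. The limit points of the
  runs of \<open>a\<A> \<oplus> b\<B>\<close> and \<open>\<A> \<otimes> \<B>\<close> are \<open>a c\<^sub>A \<oplus> b c\<^sub>B\<close> and \<open>c\<^sub>A \<otimes> c\<^sub>B\<close>
  for limit points \<open>c\<^sub>A, c\<^sub>B\<close> of the two runs along a common subsequence, and the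
  projections onto \<open>F\<^sub>A \<oplus> F\<^sub>B\<close> and \<open>F\<^sub>A \<otimes> F\<^sub>B\<close> act componentwise; this gives
  (1) and (2). For (3), \<open>\<parallel>P\<^sub>F c\<parallel>\<^sup>2 + \<parallel>P\<^sub>F\<^sub>\<bottom> c\<parallel>\<^sup>2 = 1\<close> at every limit point, so
  the two values add up to \<open>1 + sup g - inf g\<close> for \<open>g c = \<parallel>P\<^sub>F c\<parallel>\<^sup>2\<close> on the limit points.
  This is \<open>1\<close> exactly when \<open>g\<close> is constant on the limit points, that is, when
  \<open>\<parallel>P\<^sub>F s\<^sub>n\<parallel>\<^sup>2\<close> converges.\<close>

lemma cinner_self: "cinner v v = complex_of_real (vnorm2 v)"
  unfolding cinner_def vnorm2_def of_real_sum of_real_power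
  by (intro sum.cong refl) (metis complex_norm_square mult.commute of_real_power)

lemma vnorm2_nonneg: "0 \<le> vnorm2 v"
  unfolding vnorm2_def by (simp add: sum_nonneg)

lemma norm_le_sqrt_vnorm2: "cmod (v i) \<le> sqrt (vnorm2 (v::'i::finite cvec))"
  unfolding vnorm2_def by (rule real_le_rsqrt, rule member_le_sum) auto

lemma vnorm2_eq_0_iff: "vnorm2 v = 0 \<longleftrightarrow> v = (\<lambda>_. 0)"
  unfolding vnorm2_def by (simp add: sum_nonneg_eq_0_iff fun_eq_iff)

lemma cnj_cinner: "cnj (cinner u v) = cinner v u"
  unfolding cinner_def by (simp add: mult.commute)

lemma cinner_zero_left [simp]: "cinner (\<lambda>_. 0) v = 0"
  unfolding cinner_def by simp

lemma cinner_zero_right [simp]: "cinner u (\<lambda>_. 0) = 0"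
  unfolding cinner_def by simp

lemma cinner_add_left: "cinner (\<lambda>i. u i + v i) w = cinner u w + cinner v w"
  unfolding cinner_def by (simp add: distrib_right sum.distrib)

lemma cinner_add_right: "cinner u (\<lambda>i. v i + w i) = cinner u v + cinner u w"
  unfolding cinner_def by (simp add: distrib_left sum.distrib)

lemma cinner_diff_right: "cinner u (\<lambda>i. v i - w i) = cinner u v - cinner u w"
  unfolding cinner_def by (simp add: right_diff_distrib sum_subtractf)

lemma cinner_scale_left: "cinner (\<lambda>i. c * u i) v = cnj c * cinner u v"
  unfolding cinner_def by (simp add: sum_distrib_left algebra_simps)

lemma cinner_scale_right: "cinner u (\<lambda>i. c * v i) = c * cinner u v"
  unfolding cinner_def by (simp add: sum_distrib_left algebra_simps)

lemma vnorm2_scale: "vnorm2 (\<lambda>i. c * v i) = (cmod c)^2 * vnorm2 v"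
  unfolding vnorm2_def by (simp add: sum_distrib_left norm_mult power_mult_distrib)

lemma cinner_Cauchy_Schwarz: "(cmod (cinner u v))^2 \<le> vnorm2 u * vnorm2 v"
proof -
  have "cmod (cinner u v) \<le> (\<Sum>i\<in>UNIV. cmod (u i) * cmod (v i))"
    unfolding cinner_def by (rule order_trans[OF norm_sum]) (simp add: norm_mult)
  then have "(cmod (cinner u v))^2 \<le> (\<Sum>i\<in>UNIV. cmod (u i) * cmod (v i))^2"
    by (simp add: power_mono)
  also have "\<dots> \<le> vnorm2 u * vnorm2 v"
    unfolding vnorm2_def by (rule Cauchy_Schwarz_ineq_sum)
  finally show ?thesis .
qed

lemma vnorm2_orth_add:
  assumes "cinner u v = 0"
  shows "vnorm2 (\<lambda>i. u i + v i) = vnorm2 u + vnorm2 v"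
proof -
  have "cinner v u = 0" using assms cnj_cinner[of u v] by simp
  then have "cinner (\<lambda>i. u i + v i) (\<lambda>i. u i + v i) = cinner u u + cinner v v"
    using assms by (simp add: cinner_add_left cinner_add_right)
  then show ?thesis by (simp add: cinner_self flip: of_real_add)
qed

lemma sum_UNIV_Plus:
  "sum g (UNIV :: ('a::finite + 'b::finite) set) = (\<Sum>i\<in>UNIV. g (Inl i)) + (\<Sum>j\<in>UNIV. g (Inr j))"
  using sum.Plus[of "UNIV :: 'a set" "UNIV :: 'b set" g] by (simp add: UNIV_Plus_UNIV o_def)

lemma sum_UNIV_Times:
  "sum g (UNIV :: ('a::finite \<times> 'b::finite) set) = (\<Sum>i\<in>UNIV. \<Sum>j\<in>UNIV. g (i, j))"
  by (simp add: sum.cartesian_product flip: UNIV_Times_UNIV)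

lemma cinner_case_sum: "cinner (case_sum u v) (case_sum x y) = cinner u x + cinner v y"
  unfolding cinner_def sum_UNIV_Plus by simp

lemma vnorm2_case_sum: "vnorm2 (case_sum u v) = vnorm2 u + vnorm2 v"
  unfolding vnorm2_def sum_UNIV_Plus by simp

definition wsum :: "complex \<Rightarrow> 'i cvec \<Rightarrow> complex \<Rightarrow> 'j cvec \<Rightarrow> ('i + 'j) cvec" where
  "wsum a x b y = case_sum (\<lambda>i. a * x i) (\<lambda>j. b * y j)"

lemma vnorm2_wsum: "vnorm2 (wsum a x b y) = (cmod a)^2 * vnorm2 x + (cmod b)^2 * vnorm2 y"
  unfolding wsum_def by (simp add: vnorm2_case_sum vnorm2_scale)

lemma vnorm2_wsum_le:
  assumes "vnorm2 x \<le> 1" and "vnorm2 y \<le> 1" and "(cmod a)^2 + (cmod b)^2 = 1"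
  shows "vnorm2 (wsum a x b y) \<le> 1"
proof -
  have "vnorm2 (wsum a x b y) \<le> (cmod a)^2 * 1 + (cmod b)^2 * 1"
    unfolding vnorm2_wsum using assms(1,2) by (intro add_mono mult_left_mono) auto
  with assms(3) show ?thesis by simp
qed

definition tensor :: "'i cvec \<Rightarrow> 'j cvec \<Rightarrow> ('i \<times> 'j) cvec" where
  "tensor x y = (\<lambda>(i, j). x i * y j)"

lemma cinner_tensor: "cinner (tensor u v) (tensor x y) = cinner u x * cinner v y"
  unfolding cinner_def tensor_def sum_UNIV_Times by (simp add: sum_product algebra_simps)

lemma vnorm2_tensor: "vnorm2 (tensor x y) = vnorm2 x * vnorm2 y"
  unfolding vnorm2_def tensor_def sum_UNIV_Times
  by (simp add: sum_product norm_mult power_mult_distrib)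

section \<open>Subspaces and orthogonal projections\<close>

lemma csubspace_zero: "csubspace F \<Longrightarrow> (\<lambda>_. 0) \<in> F"
  unfolding csubspace_def by blast

lemma csubspace_add: "csubspace F \<Longrightarrow> u \<in> F \<Longrightarrow> v \<in> F \<Longrightarrow> (\<lambda>i. u i + v i) \<in> F"
  unfolding csubspace_def by blast

lemma csubspace_scale: "csubspace F \<Longrightarrow> u \<in> F \<Longrightarrow> (\<lambda>i. c * u i) \<in> F"
  unfolding csubspace_def by blast

lemma csubspace_diff:
  assumes "csubspace F" "u \<in> F" "v \<in> F"
  shows "(\<lambda>i. u i - v i) \<in> F"
  using csubspace_add[OF assms(1,2) csubspace_scale[OF assms(1,3), of "-1"]] by simp

lemma csubspace_orth_compl: "csubspace (orth_compl F)"
  unfolding csubspace_def orth_compl_def by (simp add: cinner_add_right cinner_scale_right)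

lemma csubspace_cspan: "csubspace (cspan X)"
  unfolding csubspace_def cspan_def by blast

lemma cspan_superset: "X \<subseteq> cspan X"
  unfolding cspan_def by blast

lemma cspan_least: "csubspace S \<Longrightarrow> X \<subseteq> S \<Longrightarrow> cspan X \<subseteq> S"
  unfolding cspan_def by blast

definition sum_space :: "'i cvec set \<Rightarrow> 'j cvec set \<Rightarrow> ('i + 'j) cvec set" where
  "sum_space F G = {case_sum u v | u v. u \<in> F \<and> v \<in> G}"

definition tensor_space :: "'i cvec set \<Rightarrow> 'j cvec set \<Rightarrow> ('i \<times> 'j) cvec set" where
  "tensor_space F G = cspan {tensor u v | u v. u \<in> F \<and> v \<in> G}"

lemma sum_space_iff: "x \<in> sum_space F G \<longleftrightarrow> (\<lambda>i. x (Inl i)) \<in> F \<and> (\<lambda>j. x (Inr j)) \<in> G"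
proof
  assume "(\<lambda>i. x (Inl i)) \<in> F \<and> (\<lambda>j. x (Inr j)) \<in> G"
  moreover have "x = case_sum (\<lambda>i. x (Inl i)) (\<lambda>j. x (Inr j))"
    by (simp add: fun_eq_iff split: sum.split)
  ultimately show "x \<in> sum_space F G"
    unfolding sum_space_def by blast
qed (auto simp: sum_space_def)

lemma csubspace_sum_space: "csubspace F \<Longrightarrow> csubspace G \<Longrightarrow> csubspace (sum_space F G)"
  unfolding csubspace_def by (auto simp: sum_space_iff)

lemma csubspace_tensor_space: "csubspace (tensor_space F G)"
  unfolding tensor_space_def by (rule csubspace_cspan)

lemma tensor_space_orth:
  assumes "\<And>u v. u \<in> F \<Longrightarrow> v \<in> G \<Longrightarrow> cinner (tensor u v) z = 0" and "\<psi> \<in> tensor_space F G"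
  shows "cinner \<psi> z = 0"
proof -
  have "csubspace {\<phi>. cinner \<phi> z = 0}"
    unfolding csubspace_def by (simp add: cinner_add_left cinner_scale_left)
  then have "tensor_space F G \<subseteq> {\<phi>. cinner \<phi> z = 0}"
    unfolding tensor_space_def using assms(1) by (intro cspan_least) auto
  then show ?thesis using assms(2) by blast
qed

lemma subspace_vec_lambda_image:
  assumes "csubspace F"
  shows "subspace (vec_lambda ` F :: (complex ^ 'i::finite) set)"
  unfolding subspace_def
proof (intro conjI ballI allI)
  show "0 \<in> vec_lambda ` F"
    using csubspace_zero[OF assms] by (force simp: zero_vec_def)
next
  fix x y assume "x \<in> vec_lambda ` F" "y \<in> vec_lambda ` F"
  then obtain u v where "u \<in> F" "v \<in> F" "x = vec_lambda u" "y = vec_lambda v" by auto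
  then show "x + y \<in> vec_lambda ` F"
    using csubspace_add[OF assms] by (force simp: plus_vec_def)
next
  fix c :: real and x assume "x \<in> vec_lambda ` F"
  then obtain u where "u \<in> F" "x = vec_lambda u" by auto
  then show "c *\<^sub>R x \<in> vec_lambda ` F"
    using csubspace_scale[OF assms] by (force simp: scaleR_vec_def scaleR_conv_of_real)
qed

lemma proj_exists:
  fixes F :: "'i::finite cvec set"
  assumes F: "csubspace F"
  shows "\<exists>p. p \<in> F \<and> (\<forall>u\<in>F. cinner u (\<lambda>i. v i - p i) = 0)"
proof -
  let ?T = "vec_lambda ` F :: (complex ^ 'i) set"
  have span_T: "span ?T = ?T"
    using subspace_vec_lambda_image[OF F] by (simp add: span_eq_iff)
  obtain y z where y: "y \<in> span ?T" and z: "\<And>w. w \<in> span ?T \<Longrightarrow> orthogonal z w"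
    and v_eq: "vec_lambda v = y + z"
    using orthogonal_subspace_decomp_exists by blast
  have p: "vec_nth y \<in> F"
    using y span_T by (auto simp: vec_lambda_inverse)
  have resid: "(\<lambda>i. v i - vec_nth y i) = vec_nth z"
    using v_eq by (auto simp: vec_eq_iff)
  have Re0: "Re (cinner u (vec_nth z)) = 0" if "u \<in> F" for u
  proof -
    have "inner z (vec_lambda u) = 0"
      using z[of "vec_lambda u"] that span_T by (simp add: orthogonal_def)
    then show ?thesis
      unfolding cinner_def inner_vec_def inner_complex_def Re_sum by (simp add: algebra_simps)
  qed
  \<comment> \<open>real orthogonality to both \<open>u\<close> and \<open>\<i> u\<close> is complex orthogonality to \<open>u\<close>\<close>
  have "\<forall>u\<in>F. cinner u (\<lambda>i. v i - vec_nth y i) = 0"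
    unfolding resid
    using Re0 Re0[OF csubspace_scale[OF F, of _ "\<i>"]]
    by (simp add: cinner_scale_left complex_eq_iff)
  with p show ?thesis by blast
qed

lemma proj_eqI:
  assumes F: "csubspace F" and p: "p \<in> F" "\<And>u. u \<in> F \<Longrightarrow> cinner u (\<lambda>i. v i - p i) = 0"
  shows "proj F v = p"
  unfolding proj_def
proof (rule the_equality)
  fix p' assume p': "p' \<in> F \<and> (\<forall>u\<in>F. cinner u (\<lambda>i. v i - p' i) = 0)"
  let ?d = "\<lambda>i. p i - p' i"
  have "?d \<in> F" using csubspace_diff[OF F] p p' by blast
  then have "cinner ?d (\<lambda>i. (v i - p' i) - (v i - p i)) = 0"
    using p p' by (simp add: cinner_diff_right)
  then have "vnorm2 ?d = 0" by (simp add: cinner_self)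
  then show "p' = p" by (simp add: vnorm2_eq_0_iff fun_eq_iff)
qed (use p in blast)

lemma proj_in_orth:
  assumes "csubspace F"
  shows "proj F v \<in> F \<and> (\<forall>u\<in>F. cinner u (\<lambda>i. v i - proj F v i) = 0)"
proof -
  obtain p where "p \<in> F" "\<forall>u\<in>F. cinner u (\<lambda>i. v i - p i) = 0"
    using proj_exists[OF assms] by blast
  moreover from this have "proj F v = p"
    by (intro proj_eqI[OF assms]) auto
  ultimately show ?thesis by simp
qed

lemma proj_in: "csubspace F \<Longrightarrow> proj F v \<in> F"
  using proj_in_orth by blast

lemma proj_orth: "csubspace F \<Longrightarrow> u \<in> F \<Longrightarrow> cinner u (\<lambda>i. v i - proj F v i) = 0"
  using proj_in_orth by blast

lemma cinner_proj: "csubspace F \<Longrightarrow> u \<in> F \<Longrightarrow> cinner u (proj F v) = cinner u v"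
  using proj_orth[of F u v] by (simp add: cinner_diff_right)

lemma vnorm2_proj_add_resid:
  assumes "csubspace F"
  shows "vnorm2 (proj F v) + vnorm2 (\<lambda>i. v i - proj F v i) = vnorm2 v"
proof -
  have "cinner (proj F v) (\<lambda>i. v i - proj F v i) = 0"
    by (rule proj_orth[OF assms proj_in[OF assms]])
  then show ?thesis
    using vnorm2_orth_add[of "proj F v" "\<lambda>i. v i - proj F v i"] by simp
qed

lemma vnorm2_proj_le: "csubspace F \<Longrightarrow> vnorm2 (proj F v) \<le> vnorm2 v"
  using vnorm2_proj_add_resid vnorm2_nonneg by (metis le_add_same_cancel1)

lemma proj_orth_compl:
  assumes F: "csubspace F"
  shows "proj (orth_compl F) v = (\<lambda>i. v i - proj F v i)"
proof (rule proj_eqI[OF csubspace_orth_compl])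
  show "(\<lambda>i. v i - proj F v i) \<in> orth_compl F"
    unfolding orth_compl_def using proj_orth[OF F] by blast
  fix u assume "u \<in> orth_compl F"
  then have "cinner (proj F v) u = 0"
    using proj_in[OF F] unfolding orth_compl_def by blast
  then show "cinner u (\<lambda>i. v i - (v i - proj F v i)) = 0"
    using cnj_cinner[of "proj F v" u] by simp
qed

lemma vnorm2_proj_orth_compl:
  "csubspace F \<Longrightarrow> vnorm2 (proj (orth_compl F) v) = vnorm2 v - vnorm2 (proj F v)"
  using vnorm2_proj_add_resid[of F v] by (simp add: proj_orth_compl)

lemma proj_scale:
  assumes F: "csubspace F"
  shows "proj F (\<lambda>i. c * v i) = (\<lambda>i. c * proj F v i)"
proof (rule proj_eqI[OF F csubspace_scale[OF F proj_in[OF F]]])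
  fix u assume "u \<in> F"
  then show "cinner u (\<lambda>i. c * v i - c * proj F v i) = 0"
    using proj_orth[OF F, of u v] by (simp add: cinner_scale_right flip: right_diff_distrib)
qed

lemma proj_diff:
  assumes F: "csubspace F"
  shows "proj F (\<lambda>i. v i - v' i) = (\<lambda>i. proj F v i - proj F v' i)"
proof (rule proj_eqI[OF F csubspace_diff[OF F proj_in[OF F] proj_in[OF F]]])
  fix u assume "u \<in> F"
  have "(\<lambda>i. v i - v' i - (proj F v i - proj F v' i))
      = (\<lambda>i. (v i - proj F v i) - (v' i - proj F v' i))"
    by (simp add: algebra_simps)
  then show "cinner u (\<lambda>i. v i - v' i - (proj F v i - proj F v' i)) = 0"
    using proj_orth[OF F \<open>u \<in> F\<close>] by (simp add: cinner_diff_right)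
qed

lemma proj_sum_space:
  assumes F: "csubspace F" and G: "csubspace G"
  shows "proj (sum_space F G) (case_sum x y) = case_sum (proj F x) (proj G y)"
proof (rule proj_eqI[OF csubspace_sum_space[OF F G]])
  show "case_sum (proj F x) (proj G y) \<in> sum_space F G"
    unfolding sum_space_def using proj_in[OF F] proj_in[OF G] by blast
  fix u assume "u \<in> sum_space F G"
  then obtain u1 u2 where "u = case_sum u1 u2" "u1 \<in> F" "u2 \<in> G"
    unfolding sum_space_def by blast
  moreover have "(\<lambda>i. case_sum x y i - case_sum (proj F x) (proj G y) i)
      = case_sum (\<lambda>i. x i - proj F x i) (\<lambda>j. y j - proj G y j)"
    by (simp add: fun_eq_iff split: sum.split)
  ultimately show "cinner u (\<lambda>i. case_sum x y i - case_sum (proj F x) (proj G y) i) = 0"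
    by (simp add: cinner_case_sum proj_orth[OF F] proj_orth[OF G])
qed

lemma vnorm2_proj_wsum:
  assumes "csubspace F" and "csubspace G"
  shows "vnorm2 (proj (sum_space F G) (wsum a x b y))
    = (cmod a)^2 * vnorm2 (proj F x) + (cmod b)^2 * vnorm2 (proj G y)"
  unfolding wsum_def by (simp add: proj_sum_space proj_scale assms vnorm2_case_sum vnorm2_scale)

lemma proj_tensor_space:
  assumes F: "csubspace F" and G: "csubspace G"
  shows "proj (tensor_space F G) (tensor x y) = tensor (proj F x) (proj G y)"
proof (rule proj_eqI[OF csubspace_tensor_space])
  show "tensor (proj F x) (proj G y) \<in> tensor_space F G"
    unfolding tensor_space_def
    by (rule subsetD[OF cspan_superset]) (use proj_in[OF F] proj_in[OF G] in blast)
  fix \<psi> assume \<psi>: "\<psi> \<in> tensor_space F G"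
  let ?rx = "\<lambda>i. x i - proj F x i" and ?ry = "\<lambda>j. y j - proj G y j"
  have resid: "(\<lambda>ij. tensor x y ij - tensor (proj F x) (proj G y) ij)
      = (\<lambda>ij. tensor ?rx y ij + tensor (proj F x) ?ry ij)"
    by (simp add: tensor_def fun_eq_iff algebra_simps split: prod.split)
  have "cinner \<psi> (tensor ?rx y) = 0"
    by (rule tensor_space_orth[OF _ \<psi>]) (simp add: cinner_tensor proj_orth[OF F])
  moreover have "cinner \<psi> (tensor (proj F x) ?ry) = 0"
    by (rule tensor_space_orth[OF _ \<psi>]) (simp add: cinner_tensor proj_orth[OF G])
  ultimately show "cinner \<psi> (\<lambda>ij. tensor x y ij - tensor (proj F x) (proj G y) ij) = 0"
    unfolding resid cinner_add_right by simp
qed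

section \<open>Limits of subsequences\<close>

lemma tendsto_fun_iff:
  fixes f :: "'a \<Rightarrow> 'i \<Rightarrow> 'b::topological_space"
  shows "(f \<longlongrightarrow> l) F \<longleftrightarrow> (\<forall>i. ((\<lambda>x. f x i) \<longlongrightarrow> l i) F)"
  using limitin_componentwise[of "\<lambda>_. euclidean" UNIV f l F]
  by (simp add: euclidean_product_topology)

lemma tendsto_cinner: "x \<longlonglongrightarrow> c \<Longrightarrow> (\<lambda>k. cinner u (x k)) \<longlonglongrightarrow> cinner u c"
  unfolding cinner_def tendsto_fun_iff by (intro tendsto_intros) auto

lemma tendsto_vnorm2: "x \<longlonglongrightarrow> c \<Longrightarrow> (\<lambda>k. vnorm2 (x k)) \<longlonglongrightarrow> vnorm2 c"
  unfolding vnorm2_def tendsto_fun_iff by (intro tendsto_intros) auto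

lemma tendsto_proj:
  assumes F: "csubspace F" and lim: "x \<longlonglongrightarrow> c"
  shows "(\<lambda>k. proj F (x k)) \<longlonglongrightarrow> proj F c"
  unfolding tendsto_fun_iff
proof
  fix i
  let ?d = "\<lambda>k i. x k i - c i"
  have "(\<lambda>k. vnorm2 (?d k)) \<longlonglongrightarrow> vnorm2 (\<lambda>i. c i - c i)"
    by (intro tendsto_vnorm2) (use lim in \<open>auto simp: tendsto_fun_iff intro: LIM_zero\<close>)
  then have "(\<lambda>k. vnorm2 (?d k)) \<longlonglongrightarrow> 0"
    by (simp add: vnorm2_def)
  from tendsto_real_sqrt[OF this] have sqrt0: "(\<lambda>k. sqrt (vnorm2 (?d k))) \<longlonglongrightarrow> 0"
    by simp
  have bound: "cmod (proj F (x k) i - proj F c i) \<le> sqrt (vnorm2 (?d k))" for k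
  proof -
    have "cmod (proj F (?d k) i) \<le> sqrt (vnorm2 (proj F (?d k)))"
      by (rule norm_le_sqrt_vnorm2)
    also have "\<dots> \<le> sqrt (vnorm2 (?d k))"
      using vnorm2_proj_le[OF F] by simp
    finally show ?thesis by (simp add: proj_diff[OF F])
  qed
  have "(\<lambda>k. proj F (x k) i - proj F c i) \<longlonglongrightarrow> 0"
    using bound by (intro Lim_null_comparison[OF always_eventually sqrt0]) simp
  then show "(\<lambda>k. proj F (x k) i) \<longlonglongrightarrow> proj F c i"
    by (rule LIM_zero_cancel)
qed

lemma tendsto_wsum:
  "x \<longlonglongrightarrow> cx \<Longrightarrow> y \<longlonglongrightarrow> cy \<Longrightarrow> (\<lambda>k. wsum a (x k) b (y k)) \<longlonglongrightarrow> wsum a cx b cy"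
  unfolding tendsto_fun_iff wsum_def by (auto intro!: tendsto_mult split: sum.split)

lemma tendsto_tensor:
  "x \<longlonglongrightarrow> cx \<Longrightarrow> y \<longlonglongrightarrow> cy \<Longrightarrow> (\<lambda>k. tensor (x k) (y k)) \<longlonglongrightarrow> tensor cx cy"
  unfolding tendsto_fun_iff tensor_def by (auto intro!: tendsto_mult)

definition subseq_limits :: "(nat \<Rightarrow> 'a::topological_space) \<Rightarrow> 'a set" where
  "subseq_limits s = {c. \<exists>r. strict_mono r \<and> (s \<circ> r) \<longlonglongrightarrow> c}"

lemma subseq_limitsI: "strict_mono r \<Longrightarrow> (s \<circ> r) \<longlonglongrightarrow> c \<Longrightarrow> c \<in> subseq_limits s"
  unfolding subseq_limits_def by blast

lemma convergent_subseq_cvec: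
  fixes s :: "nat \<Rightarrow> 'i::finite cvec"
  assumes "\<And>n. vnorm2 (s n) \<le> K"
  shows "\<exists>r c. strict_mono r \<and> (s \<circ> r) \<longlonglongrightarrow> c"
proof -
  have "norm (vec_lambda (s n)) = sqrt (vnorm2 (s n))" for n
    by (simp add: norm_vec_def L2_set_def vnorm2_def)
  then have "norm (vec_lambda (s n)) \<le> sqrt K" for n
    using assms[of n] by simp
  then have "bounded (range (\<lambda>n. vec_lambda (s n)))"
    unfolding bounded_iff by blast
  then obtain l r where r: "strict_mono r" and l: "((\<lambda>n. vec_lambda (s n)) \<circ> r) \<longlonglongrightarrow> l"
    using bounded_imp_convergent_subsequence by blast
  have "(s \<circ> r) \<longlonglongrightarrow> vec_nth l"
    unfolding tendsto_fun_iff using tendsto_vec_nth[OF l] by (simp add: o_def)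
  with r show ?thesis by blast
qed

lemma subseq_limits_nonempty:
  fixes s :: "nat \<Rightarrow> 'i::finite cvec"
  shows "(\<And>n. vnorm2 (s n) \<le> K) \<Longrightarrow> subseq_limits s \<noteq> {}"
  using convergent_subseq_cvec unfolding subseq_limits_def by blast

lemma vnorm2_subseq_limit:
  assumes "\<And>n. vnorm2 (s n) = 1" and "c \<in> subseq_limits s"
  shows "vnorm2 c = 1"
proof -
  obtain r where "(s \<circ> r) \<longlonglongrightarrow> c"
    using assms(2) unfolding subseq_limits_def by blast
  then have "(\<lambda>k. vnorm2 ((s \<circ> r) k)) \<longlonglongrightarrow> vnorm2 c"
    by (rule tendsto_vnorm2)
  then show ?thesis
    using assms(1) by (simp add: LIMSEQ_const_iff)
qed

lemma convergent_subseq_pair: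
  fixes s :: "nat \<Rightarrow> 'i::finite cvec" and t :: "nat \<Rightarrow> 'j::finite cvec"
  assumes "\<And>n. vnorm2 (s n) \<le> K" and "\<And>n. vnorm2 (t n) \<le> L"
  shows "\<exists>r c d. strict_mono r \<and> (s \<circ> r) \<longlonglongrightarrow> c \<and> (t \<circ> r) \<longlonglongrightarrow> d"
proof -
  obtain r1 c where r1: "strict_mono r1" and c: "(s \<circ> r1) \<longlonglongrightarrow> c"
    using convergent_subseq_cvec assms(1) by blast
  have "\<exists>r2 d. strict_mono r2 \<and> (t \<circ> r1 \<circ> r2) \<longlonglongrightarrow> d"
    by (rule convergent_subseq_cvec[where K = L]) (simp add: assms(2))
  then obtain r2 d where r2: "strict_mono r2" and d: "(t \<circ> (r1 \<circ> r2)) \<longlonglongrightarrow> d"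
    by (auto simp: o_assoc)
  have "(s \<circ> (r1 \<circ> r2)) \<longlonglongrightarrow> c"
    using LIMSEQ_subseq_LIMSEQ[OF c r2] by (simp add: o_assoc)
  with strict_mono_o[OF r1 r2] d show ?thesis
    by blast
qed

lemma subseq_limits_combineE:
  fixes sA :: "nat \<Rightarrow> 'i::finite cvec" and sB :: "nat \<Rightarrow> 'j::finite cvec"
    and \<Phi> :: "'i cvec \<Rightarrow> 'j cvec \<Rightarrow> 'k::t2_space"
  assumes "\<And>n. vnorm2 (sA n) \<le> 1" and "\<And>n. vnorm2 (sB n) \<le> 1"
    and \<Phi>: "\<And>x y cx cy. x \<longlonglongrightarrow> cx \<Longrightarrow> y \<longlonglongrightarrow> cy \<Longrightarrow> (\<lambda>k. \<Phi> (x k) (y k)) \<longlonglongrightarrow> \<Phi> cx cy"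
    and "c \<in> subseq_limits (\<lambda>n. \<Phi> (sA n) (sB n))"
  obtains cA cB where "cA \<in> subseq_limits sA" "cB \<in> subseq_limits sB" "c = \<Phi> cA cB"
proof -
  obtain r where r: "strict_mono r" and lim: "((\<lambda>n. \<Phi> (sA n) (sB n)) \<circ> r) \<longlonglongrightarrow> c"
    using assms(4) unfolding subseq_limits_def by blast
  have "\<exists>r' cA cB. strict_mono r' \<and> (sA \<circ> r \<circ> r') \<longlonglongrightarrow> cA \<and> (sB \<circ> r \<circ> r') \<longlonglongrightarrow> cB"
    by (rule convergent_subseq_pair[where K = 1 and L = 1]) (simp_all add: assms(1,2))
  then obtain r' cA cB where r': "strict_mono r'"
    and limA: "(sA \<circ> r \<circ> r') \<longlonglongrightarrow> cA" and limB: "(sB \<circ> r \<circ> r') \<longlonglongrightarrow> cB"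
    by blast
  have rr': "strict_mono (r \<circ> r')"
    using r r' by (rule strict_mono_o)
  have "((\<lambda>n. \<Phi> (sA n) (sB n)) \<circ> (r \<circ> r')) \<longlonglongrightarrow> \<Phi> cA cB"
    using \<Phi>[OF limA limB] by (simp add: o_def)
  moreover have "((\<lambda>n. \<Phi> (sA n) (sB n)) \<circ> (r \<circ> r')) \<longlonglongrightarrow> c"
    using LIMSEQ_subseq_LIMSEQ[OF lim r'] by (simp add: o_assoc)
  ultimately have "\<Phi> cA cB = c"
    by (rule LIMSEQ_unique)
  moreover have "cA \<in> subseq_limits sA"
    by (rule subseq_limitsI[OF rr']) (simp add: o_assoc limA)
  moreover have "cB \<in> subseq_limits sB"
    by (rule subseq_limitsI[OF rr']) (simp add: o_assoc limB)
  ultimately show ?thesis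
    using that by simp
qed

lemma subseq_limits_combineI:
  fixes sA :: "nat \<Rightarrow> 'i::finite cvec" and sB :: "nat \<Rightarrow> 'j::finite cvec"
    and \<Phi> :: "'i cvec \<Rightarrow> 'j cvec \<Rightarrow> 'k::topological_space"
  assumes "\<And>n. vnorm2 (sA n) \<le> 1" and "\<And>n. vnorm2 (sB n) \<le> 1"
    and \<Phi>: "\<And>x y cx cy. x \<longlonglongrightarrow> cx \<Longrightarrow> y \<longlonglongrightarrow> cy \<Longrightarrow> (\<lambda>k. \<Phi> (x k) (y k)) \<longlonglongrightarrow> \<Phi> cx cy"
    and "cA \<in> subseq_limits sA"
  shows "\<exists>cB\<in>subseq_limits sB. \<Phi> cA cB \<in> subseq_limits (\<lambda>n. \<Phi> (sA n) (sB n))"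
proof -
  obtain r where r: "strict_mono r" and lim: "(sA \<circ> r) \<longlonglongrightarrow> cA"
    using assms(4) unfolding subseq_limits_def by blast
  have "\<exists>r' cB. strict_mono r' \<and> (sB \<circ> r \<circ> r') \<longlonglongrightarrow> cB"
    by (rule convergent_subseq_cvec[where K = 1]) (simp add: assms(2))
  then obtain r' cB where r': "strict_mono r'" and limB: "(sB \<circ> r \<circ> r') \<longlonglongrightarrow> cB"
    by blast
  have rr': "strict_mono (r \<circ> r')"
    using r r' by (rule strict_mono_o)
  have limA: "(sA \<circ> r \<circ> r') \<longlonglongrightarrow> cA"
    using LIMSEQ_subseq_LIMSEQ[OF lim r'] .
  have "((\<lambda>n. \<Phi> (sA n) (sB n)) \<circ> (r \<circ> r')) \<longlonglongrightarrow> \<Phi> cA cB"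
    using \<Phi>[OF limA limB] by (simp add: o_def)
  then have "\<Phi> cA cB \<in> subseq_limits (\<lambda>n. \<Phi> (sA n) (sB n))"
    by (rule subseq_limitsI[OF rr'])
  moreover have "cB \<in> subseq_limits sB"
    by (rule subseq_limitsI[OF rr']) (simp add: o_assoc limB)
  ultimately show ?thesis by blast
qed

lemma LIMSEQ_if_subsubseqs:
  fixes x :: "nat \<Rightarrow> 'a::metric_space"
  assumes "\<And>r :: nat \<Rightarrow> nat. strict_mono r \<Longrightarrow>
    \<exists>r' :: nat \<Rightarrow> nat. strict_mono r' \<and> (x \<circ> r \<circ> r') \<longlonglongrightarrow> l"
  shows "x \<longlonglongrightarrow> l"
proof (rule ccontr)
  assume "\<not> x \<longlonglongrightarrow> l"
  then obtain e where e: "e > 0" and "\<not> eventually (\<lambda>n. dist (x n) l < e) sequentially"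
    unfolding tendsto_iff by blast
  then obtain r :: "nat \<Rightarrow> nat" where r: "strict_mono r" and far: "\<And>n. \<not> dist (x (r n)) l < e"
    using not_eventually_sequentiallyD[of "\<lambda>n. dist (x n) l < e"] by auto
  obtain r' where "(x \<circ> r \<circ> r') \<longlonglongrightarrow> l"
    using assms[OF r] by blast
  then obtain k where "dist (x (r (r' k))) l < e"
    using e unfolding tendsto_iff eventually_sequentially by fastforce
  with far show False by blast
qed

lemma convergent_iff_const_on_subseq_limits:
  fixes s :: "nat \<Rightarrow> 'i::finite cvec" and g :: "'i cvec \<Rightarrow> real"
  assumes bounded: "\<And>n. vnorm2 (s n) \<le> 1"
    and g: "\<And>x c. x \<longlonglongrightarrow> c \<Longrightarrow> (\<lambda>k. g (x k)) \<longlonglongrightarrow> g c"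
  shows "convergent (\<lambda>n. g (s n)) \<longleftrightarrow> (\<forall>c\<in>subseq_limits s. \<forall>d\<in>subseq_limits s. g c = g d)"
proof
  assume "convergent (\<lambda>n. g (s n))"
  then obtain M where M: "(\<lambda>n. g (s n)) \<longlonglongrightarrow> M"
    unfolding convergent_def by blast
  have "g c = M" if c: "c \<in> subseq_limits s" for c
  proof -
    obtain r where r: "strict_mono r" and lim: "(s \<circ> r) \<longlonglongrightarrow> c"
      using c unfolding subseq_limits_def by blast
    have "(\<lambda>k. g ((s \<circ> r) k)) \<longlonglongrightarrow> g c" by (rule g[OF lim])
    moreover have "(\<lambda>k. g ((s \<circ> r) k)) \<longlonglongrightarrow> M"
      using LIMSEQ_subseq_LIMSEQ[OF M r] by (simp add: o_def)
    ultimately show ?thesis by (rule LIMSEQ_unique)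
  qed
  then show "\<forall>c\<in>subseq_limits s. \<forall>d\<in>subseq_limits s. g c = g d" by simp
next
  assume const: "\<forall>c\<in>subseq_limits s. \<forall>d\<in>subseq_limits s. g c = g d"
  obtain c0 where c0: "c0 \<in> subseq_limits s"
    using subseq_limits_nonempty[of s 1] bounded by blast
  have "(\<lambda>n. g (s n)) \<longlonglongrightarrow> g c0"
  proof (rule LIMSEQ_if_subsubseqs)
    fix r :: "nat \<Rightarrow> nat" assume r: "strict_mono r"
    have "\<exists>r' c. strict_mono r' \<and> (s \<circ> r \<circ> r') \<longlonglongrightarrow> c"
      by (rule convergent_subseq_cvec[where K = 1]) (simp add: bounded)
    then obtain r' c where r': "strict_mono r'" and lim: "(s \<circ> r \<circ> r') \<longlonglongrightarrow> c"
      by blast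
    have "c \<in> subseq_limits s"
      by (rule subseq_limitsI[OF strict_mono_o[OF r r']]) (simp add: o_assoc lim)
    with const c0 have "g c = g c0" by blast
    then have "((\<lambda>n. g (s n)) \<circ> r \<circ> r') \<longlonglongrightarrow> g c0"
      using g[OF lim] by (simp add: o_def)
    with r' show "\<exists>r'. strict_mono r' \<and> ((\<lambda>n. g (s n)) \<circ> r \<circ> r') \<longlonglongrightarrow> g c0"
      by blast
  qed
  then show "convergent (\<lambda>n. g (s n))"
    unfolding convergent_def by blast
qed

section \<open>The non-disturbing value of a sequence of states\<close>

definition ND :: "'i::finite cvec set \<Rightarrow> (nat \<Rightarrow> 'i cvec) \<Rightarrow> real" where
  "ND F s = Sup (insert 0 {INF i. (cmod (cinner \<psi> (s (n i))))^2 | \<psi> n.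
     \<psi> \<in> F \<and> vnorm2 \<psi> = 1 \<and> strict_mono (n :: nat \<Rightarrow> nat)})"

lemma INF_le_nonneg:
  fixes f :: "nat \<Rightarrow> real"
  shows "(\<And>i. 0 \<le> f i) \<Longrightarrow> (INF i. f i) \<le> f j"
  by (rule cINF_lower) (auto intro: bdd_belowI[of _ 0])

lemma bdd_above_ND_values:
  fixes s :: "nat \<Rightarrow> 'i::finite cvec" and F :: "'i cvec set"
  assumes "\<And>n. vnorm2 (s n) \<le> 1"
  shows "bdd_above (insert 0 {INF i. (cmod (cinner \<psi> (s (n i))))^2 | \<psi> n.
     \<psi> \<in> F \<and> vnorm2 \<psi> = 1 \<and> strict_mono (n :: nat \<Rightarrow> nat)})"
proof (rule bdd_aboveI[of _ 1], safe)
  fix \<psi> :: "'i cvec" and n :: "nat \<Rightarrow> nat" assume "vnorm2 \<psi> = 1"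
  have "(INF i. (cmod (cinner \<psi> (s (n i))))^2) \<le> (cmod (cinner \<psi> (s (n 0))))^2"
    by (rule INF_le_nonneg) simp
  also have "\<dots> \<le> vnorm2 \<psi> * vnorm2 (s (n 0))"
    by (rule cinner_Cauchy_Schwarz)
  also have "\<dots> \<le> 1"
    using \<open>vnorm2 \<psi> = 1\<close> assms by simp
  finally show "(INF i. (cmod (cinner \<psi> (s (n i))))^2) \<le> 1" .
qed simp

lemma ND_nonneg: "(\<And>n. vnorm2 (s n) \<le> 1) \<Longrightarrow> 0 \<le> ND F s"
  unfolding ND_def by (rule cSup_upper[OF insertI1 bdd_above_ND_values])

lemma INF_le_ND:
  fixes n :: "nat \<Rightarrow> nat"
  assumes "\<And>n. vnorm2 (s n) \<le> 1" and "\<psi> \<in> F" "vnorm2 \<psi> = 1" "strict_mono n"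
  shows "(INF i. (cmod (cinner \<psi> (s (n i))))^2) \<le> ND F s"
  unfolding ND_def
  by (rule cSup_upper[OF insertI2 bdd_above_ND_values]) (use assms in blast)+

lemma ND_le:
  assumes "0 \<le> M"
    and "\<And>\<psi> (n :: nat \<Rightarrow> nat). \<psi> \<in> F \<Longrightarrow> vnorm2 \<psi> = 1 \<Longrightarrow> strict_mono n \<Longrightarrow>
           (INF i. (cmod (cinner \<psi> (s (n i))))^2) \<le> M"
  shows "ND F s \<le> M"
  unfolding ND_def using assms by (intro cSup_least) auto

lemma limit_le_ND:
  assumes bounded: "\<And>n. vnorm2 (s n) \<le> 1" and \<psi>: "\<psi> \<in> F" "vnorm2 \<psi> = 1" and r: "strict_mono r"
    and lim: "(\<lambda>k. (cmod (cinner \<psi> (s (r k))))^2) \<longlonglongrightarrow> L"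
  shows "L \<le> ND F s"
proof (rule field_le_epsilon)
  fix e :: real assume "0 < e"
  with lim obtain N where N: "\<And>k. k \<ge> N \<Longrightarrow> dist ((cmod (cinner \<psi> (s (r k))))^2) L < e"
    unfolding tendsto_iff eventually_sequentially by blast
  define r' where "r' k = r (k + N)" for k
  have r': "strict_mono r'"
    using r unfolding r'_def strict_mono_def by simp
  have "L - e \<le> (INF k. (cmod (cinner \<psi> (s (r' k))))^2)"
  proof (rule cINF_greatest)
    fix k
    show "L - e \<le> (cmod (cinner \<psi> (s (r' k))))^2"
      using N[of "k + N"] unfolding r'_def dist_real_def by linarith
  qed simp
  also have "\<dots> \<le> ND F s"
    by (rule INF_le_ND[OF bounded \<psi> r'])
  finally show "L \<le> ND F s + e" by simp
qed

lemma proj_subseq_limit_le_ND: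
  assumes bounded: "\<And>n. vnorm2 (s n) \<le> 1" and F: "csubspace F" and c: "c \<in> subseq_limits s"
  shows "vnorm2 (proj F c) \<le> ND F s"
proof (cases "vnorm2 (proj F c) = 0")
  case True
  then show ?thesis using ND_nonneg[OF bounded] by simp
next
  case False
  let ?N = "vnorm2 (proj F c)"
  have N: "?N > 0" using False vnorm2_nonneg[of "proj F c"] by simp
  obtain r where r: "strict_mono r" and lim: "(s \<circ> r) \<longlonglongrightarrow> c"
    using c unfolding subseq_limits_def by blast
  define \<psi> where "\<psi> = (\<lambda>i. complex_of_real (1 / sqrt ?N) * proj F c i)"
  have \<psi>F: "\<psi> \<in> F"
    unfolding \<psi>_def by (rule csubspace_scale[OF F proj_in[OF F]])
  have \<psi>1: "vnorm2 \<psi> = 1"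
    unfolding \<psi>_def vnorm2_scale using N by (simp add: norm_divide power_divide)
  have "cinner \<psi> c = complex_of_real (1 / sqrt ?N) * complex_of_real ?N"
    unfolding \<psi>_def cinner_scale_left
    by (simp add: cinner_proj[OF F proj_in[OF F], symmetric] cinner_self)
  then have "(cmod (cinner \<psi> c))^2 = ?N"
    using N by (simp add: norm_divide power_divide power2_eq_square)
  moreover have "(\<lambda>k. (cmod (cinner \<psi> (s (r k))))^2) \<longlonglongrightarrow> (cmod (cinner \<psi> c))^2"
    using tendsto_cinner[OF lim, of \<psi>] by (intro tendsto_intros) (simp add: o_def)
  ultimately show ?thesis
    using limit_le_ND[OF bounded \<psi>F \<psi>1 r] by simp
qed

lemma ND_le_of_subseq_limits:
  assumes bounded: "\<And>n. vnorm2 (s n) \<le> 1" and F: "csubspace F"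
    and M: "\<And>c. c \<in> subseq_limits s \<Longrightarrow> vnorm2 (proj F c) \<le> M"
  shows "ND F s \<le> M"
proof (rule ND_le)
  obtain c0 where "c0 \<in> subseq_limits s"
    using subseq_limits_nonempty[of s 1] bounded by blast
  then show "0 \<le> M"
    using M vnorm2_nonneg order_trans by blast
next
  fix \<psi> and n :: "nat \<Rightarrow> nat" assume \<psi>: "\<psi> \<in> F" "vnorm2 \<psi> = 1" and n: "strict_mono n"
  have "\<exists>r c. strict_mono r \<and> (s \<circ> n \<circ> r) \<longlonglongrightarrow> c"
    by (rule convergent_subseq_cvec[where K = 1]) (simp add: bounded)
  then obtain r c where r: "strict_mono r" and lim: "(s \<circ> n \<circ> r) \<longlonglongrightarrow> c"
    by blast
  have c: "c \<in> subseq_limits s"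
    by (rule subseq_limitsI[OF strict_mono_o[OF n r]]) (simp add: o_assoc lim)
  have "(\<lambda>k. (cmod (cinner \<psi> (s (n (r k)))))^2) \<longlonglongrightarrow> (cmod (cinner \<psi> c))^2"
    using tendsto_cinner[OF lim, of \<psi>] by (intro tendsto_intros) (simp add: o_def)
  moreover have "(INF i. (cmod (cinner \<psi> (s (n i))))^2) \<le> (cmod (cinner \<psi> (s (n j))))^2" for j
    by (rule INF_le_nonneg) simp
  ultimately have "(INF i. (cmod (cinner \<psi> (s (n i))))^2) \<le> (cmod (cinner \<psi> c))^2"
    by (intro LIMSEQ_le_const) auto
  also have "\<dots> = (cmod (cinner \<psi> (proj F c)))^2"
    by (simp add: cinner_proj[OF F \<psi>(1)])
  also have "\<dots> \<le> vnorm2 (proj F c)"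
    using cinner_Cauchy_Schwarz[of \<psi> "proj F c"] \<psi>(2) by simp
  also have "\<dots> \<le> M"
    by (rule M[OF c])
  finally show "(INF i. (cmod (cinner \<psi> (s (n i))))^2) \<le> M" .
qed

lemma scaled_ND_le:
  assumes s: "\<And>n. vnorm2 (s n) \<le> 1" and t: "\<And>n. vnorm2 (t n) \<le> 1"
    and F: "csubspace F" and G: "csubspace G" and k: "0 \<le> k"
    and lift: "\<And>c. c \<in> subseq_limits s \<Longrightarrow>
      \<exists>d\<in>subseq_limits t. k * vnorm2 (proj F c) \<le> vnorm2 (proj G d)"
  shows "k * ND F s \<le> ND G t"
proof (cases "k = 0")
  case True
  then show ?thesis using ND_nonneg[OF t] by simp
next
  case False
  with k have k: "k > 0" by simp
  have "ND F s \<le> ND G t / k"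
  proof (rule ND_le_of_subseq_limits[OF s F])
    fix c assume "c \<in> subseq_limits s"
    then obtain d where d: "d \<in> subseq_limits t" and le: "k * vnorm2 (proj F c) \<le> vnorm2 (proj G d)"
      using lift by blast
    have "k * vnorm2 (proj F c) \<le> ND G t"
      using le proj_subseq_limit_le_ND[OF t G d] by linarith
    then show "vnorm2 (proj F c) \<le> ND G t / k"
      using k by (simp add: field_simps)
  qed
  then show ?thesis using k by (simp add: field_simps)
qed

lemma ND_wsum_le:
  fixes sA :: "nat \<Rightarrow> 'i::finite cvec" and sB :: "nat \<Rightarrow> 'j::finite cvec"
  assumes sA: "\<And>n. vnorm2 (sA n) \<le> 1" and sB: "\<And>n. vnorm2 (sB n) \<le> 1"
    and FA: "csubspace FA" and FB: "csubspace FB" and ab: "(cmod a)^2 + (cmod b)^2 = 1"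
  shows "ND (sum_space FA FB) (\<lambda>n. wsum a (sA n) b (sB n))
    \<le> (cmod a)^2 * ND FA sA + (cmod b)^2 * ND FB sB"
proof (rule ND_le_of_subseq_limits)
  show "vnorm2 (wsum a (sA n) b (sB n)) \<le> 1" for n
    using sA sB ab by (rule vnorm2_wsum_le)
  show "csubspace (sum_space FA FB)"
    using FA FB by (rule csubspace_sum_space)
  fix c assume lim: "c \<in> subseq_limits (\<lambda>n. wsum a (sA n) b (sB n))"
  obtain cA cB where cA: "cA \<in> subseq_limits sA" and cB: "cB \<in> subseq_limits sB"
    and c: "c = wsum a cA b cB"
    by (rule subseq_limits_combineE[of sA sB "\<lambda>x y. wsum a x b y", OF _ _ tendsto_wsum lim])
      (simp_all add: sA sB)
  have "vnorm2 (proj FA cA) \<le> ND FA sA"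
    by (rule proj_subseq_limit_le_ND[OF _ FA cA]) (simp add: sA)
  moreover have "vnorm2 (proj FB cB) \<le> ND FB sB"
    by (rule proj_subseq_limit_le_ND[OF _ FB cB]) (simp add: sB)
  ultimately
  show "vnorm2 (proj (sum_space FA FB) c) \<le> (cmod a)^2 * ND FA sA + (cmod b)^2 * ND FB sB"
    unfolding c vnorm2_proj_wsum[OF FA FB] by (intro add_mono mult_left_mono) auto
qed

lemma ND_wsum_ge:
  fixes sA :: "nat \<Rightarrow> 'i::finite cvec" and sB :: "nat \<Rightarrow> 'j::finite cvec"
  assumes sA: "\<And>n. vnorm2 (sA n) \<le> 1" and sB: "\<And>n. vnorm2 (sB n) \<le> 1"
    and FA: "csubspace FA" and FB: "csubspace FB" and ab: "(cmod a)^2 + (cmod b)^2 = 1"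
  shows "(cmod a)^2 * ND FA sA \<le> ND (sum_space FA FB) (\<lambda>n. wsum a (sA n) b (sB n))"
    and "(cmod b)^2 * ND FB sB \<le> ND (sum_space FA FB) (\<lambda>n. wsum a (sA n) b (sB n))"
proof -
  have s: "vnorm2 (wsum a (sA n) b (sB n)) \<le> 1" for n
    using sA sB ab by (rule vnorm2_wsum_le)
  note FAB = csubspace_sum_space[OF FA FB]
  show "(cmod a)^2 * ND FA sA \<le> ND (sum_space FA FB) (\<lambda>n. wsum a (sA n) b (sB n))"
  proof (rule scaled_ND_le[OF _ s FA FAB])
    fix cA assume cA: "cA \<in> subseq_limits sA"
    have "\<exists>cB\<in>subseq_limits sB. wsum a cA b cB \<in> subseq_limits (\<lambda>n. wsum a (sA n) b (sB n))"
      by (rule subseq_limits_combineI[of sA sB "\<lambda>x y. wsum a x b y", OF _ _ tendsto_wsum cA])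
        (simp_all add: sA sB)
    then obtain cB where "wsum a cA b cB \<in> subseq_limits (\<lambda>n. wsum a (sA n) b (sB n))"
      by blast
    then show "\<exists>d\<in>subseq_limits (\<lambda>n. wsum a (sA n) b (sB n)).
        (cmod a)^2 * vnorm2 (proj FA cA) \<le> vnorm2 (proj (sum_space FA FB) d)"
      by (intro bexI[of _ "wsum a cA b cB"]) (auto simp: vnorm2_proj_wsum[OF FA FB] vnorm2_nonneg)
  qed (use sA in auto)
  show "(cmod b)^2 * ND FB sB \<le> ND (sum_space FA FB) (\<lambda>n. wsum a (sA n) b (sB n))"
  proof (rule scaled_ND_le[OF _ s FB FAB])
    fix cB assume cB: "cB \<in> subseq_limits sB"
    have "\<exists>cA\<in>subseq_limits sA. wsum a cA b cB \<in> subseq_limits (\<lambda>n. wsum a (sA n) b (sB n))"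
      by (rule subseq_limits_combineI[of sB sA "\<lambda>y x. wsum a x b y", OF _ _ tendsto_wsum cB])
        (simp_all add: sA sB)
    then obtain cA where "wsum a cA b cB \<in> subseq_limits (\<lambda>n. wsum a (sA n) b (sB n))"
      by blast
    then show "\<exists>d\<in>subseq_limits (\<lambda>n. wsum a (sA n) b (sB n)).
        (cmod b)^2 * vnorm2 (proj FB cB) \<le> vnorm2 (proj (sum_space FA FB) d)"
      by (intro bexI[of _ "wsum a cA b cB"]) (auto simp: vnorm2_proj_wsum[OF FA FB] vnorm2_nonneg)
  qed (use sB in auto)
qed

lemma ND_tensor_le:
  fixes sA :: "nat \<Rightarrow> 'i::finite cvec" and sB :: "nat \<Rightarrow> 'j::finite cvec"
  assumes sA: "\<And>n. vnorm2 (sA n) \<le> 1" and sB: "\<And>n. vnorm2 (sB n) \<le> 1"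
    and FA: "csubspace FA" and FB: "csubspace FB"
  shows "ND (tensor_space FA FB) (\<lambda>n. tensor (sA n) (sB n)) \<le> ND FA sA * ND FB sB"
proof (rule ND_le_of_subseq_limits)
  show "vnorm2 (tensor (sA n) (sB n)) \<le> 1" for n
    unfolding vnorm2_tensor using sA[of n] sB[of n] vnorm2_nonneg by (intro mult_le_one) auto
  show "csubspace (tensor_space FA FB)"
    by (rule csubspace_tensor_space)
  fix c assume lim: "c \<in> subseq_limits (\<lambda>n. tensor (sA n) (sB n))"
  obtain cA cB where cA: "cA \<in> subseq_limits sA" and cB: "cB \<in> subseq_limits sB"
    and c: "c = tensor cA cB"
    by (rule subseq_limits_combineE[of sA sB tensor, OF _ _ tendsto_tensor lim]) (simp_all add: sA sB)
  have "vnorm2 (proj FA cA) \<le> ND FA sA"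
    by (rule proj_subseq_limit_le_ND[OF _ FA cA]) (simp add: sA)
  moreover have "vnorm2 (proj FB cB) \<le> ND FB sB"
    by (rule proj_subseq_limit_le_ND[OF _ FB cB]) (simp add: sB)
  ultimately
  show "vnorm2 (proj (tensor_space FA FB) c) \<le> ND FA sA * ND FB sB"
    unfolding c proj_tensor_space[OF FA FB] vnorm2_tensor
    using ND_nonneg[of sA FA] sA by (intro mult_mono) (auto simp: vnorm2_nonneg)
qed

lemma one_minus_proj_subseq_limit_le_ND_orth_compl:
  assumes s: "\<And>n. vnorm2 (s n) = 1" and F: "csubspace F" and c: "c \<in> subseq_limits s"
  shows "1 - vnorm2 (proj F c) \<le> ND (orth_compl F) s"
proof -
  have "vnorm2 (proj (orth_compl F) c) \<le> ND (orth_compl F) s"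
    by (rule proj_subseq_limit_le_ND[OF _ csubspace_orth_compl c]) (simp add: s)
  then show ?thesis
    using vnorm2_proj_orth_compl[OF F] vnorm2_subseq_limit[OF s c] by simp
qed

lemma ND_add_ND_orth_compl_ge:
  assumes s: "\<And>n. vnorm2 (s n) = 1" and F: "csubspace F"
  shows "1 \<le> ND F s + ND (orth_compl F) s"
proof -
  obtain c where c: "c \<in> subseq_limits s"
    using subseq_limits_nonempty[of s 1] s by fastforce
  have "vnorm2 (proj F c) \<le> ND F s"
    by (rule proj_subseq_limit_le_ND[OF _ F c]) (simp add: s)
  with one_minus_proj_subseq_limit_le_ND_orth_compl[OF s F c] show ?thesis
    by simp
qed

lemma ND_add_ND_orth_compl_eq_1_iff:
  assumes s: "\<And>n. vnorm2 (s n) = 1" and F: "csubspace F"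
  shows "ND F s + ND (orth_compl F) s = 1 \<longleftrightarrow> convergent (\<lambda>n. vnorm2 (proj F (s n)))"
proof -
  have bounded: "\<And>n. vnorm2 (s n) \<le> 1" using s by simp
  let ?g = "\<lambda>c. vnorm2 (proj F c)"
  have "ND F s + ND (orth_compl F) s = 1
      \<longleftrightarrow> (\<forall>c\<in>subseq_limits s. \<forall>d\<in>subseq_limits s. ?g c = ?g d)"
  proof
    assume "ND F s + ND (orth_compl F) s = 1"
    then have "?g c \<le> ?g d" if "c \<in> subseq_limits s" "d \<in> subseq_limits s" for c d
      using proj_subseq_limit_le_ND[OF bounded F that(1)]
        one_minus_proj_subseq_limit_le_ND_orth_compl[OF s F that(2)] by simp
    then show "\<forall>c\<in>subseq_limits s. \<forall>d\<in>subseq_limits s. ?g c = ?g d"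
      by (blast intro: order_antisym)
  next
    assume const: "\<forall>c\<in>subseq_limits s. \<forall>d\<in>subseq_limits s. ?g c = ?g d"
    obtain c0 where c0: "c0 \<in> subseq_limits s"
      using subseq_limits_nonempty[of s 1] bounded by blast
    with const have same: "?g c = ?g c0" if "c \<in> subseq_limits s" for c
      using that by blast
    have "ND F s \<le> ?g c0"
      by (rule ND_le_of_subseq_limits[OF bounded F]) (simp add: same)
    moreover have "ND (orth_compl F) s \<le> 1 - ?g c0"
    proof (rule ND_le_of_subseq_limits[OF bounded csubspace_orth_compl])
      fix c assume c: "c \<in> subseq_limits s"
      then show "vnorm2 (proj (orth_compl F) c) \<le> 1 - ?g c0"
        using vnorm2_proj_orth_compl[OF F] vnorm2_subseq_limit[OF s c] same[OF c] by simp
    qed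
    ultimately show "ND F s + ND (orth_compl F) s = 1"
      using ND_add_ND_orth_compl_ge[where s = s, OF s F] by simp
  qed
  also have "\<dots> \<longleftrightarrow> convergent (\<lambda>n. ?g (s n))"
    by (rule convergent_iff_const_on_subseq_limits[OF bounded, symmetric])
      (intro tendsto_vnorm2 tendsto_proj[OF F])
  finally show ?thesis .
qed

lemma run_0: "run A w 0 = init A"
  unfolding run_def state_def prefix_def by simp

lemma run_Suc: "run A w (Suc n) = mapply (trans A (w n)) (run A w n)"
  unfolding run_def state_def prefix_def by simp

lemma cinner_mapply: "cinner (mapply M u) v = cinner u (mapply (adjoint M) v)"
proof -
  have "cinner (mapply M u) v = (\<Sum>i\<in>UNIV. \<Sum>j\<in>UNIV. cnj (M i j) * cnj (u j) * v i)"
    unfolding cinner_def mapply_def by (simp add: sum_distrib_right)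
  also have "\<dots> = (\<Sum>j\<in>UNIV. \<Sum>i\<in>UNIV. cnj (M i j) * cnj (u j) * v i)"
    by (rule sum.swap)
  also have "\<dots> = cinner u (mapply (adjoint M) v)"
    unfolding cinner_def mapply_def adjoint_def sum_distrib_left
    by (intro sum.cong refl) (simp add: mult.commute mult.left_commute)
  finally show ?thesis .
qed

lemma mapply_mapply: "mapply M (mapply N v) = mapply (mmult M N) v"
proof
  fix i
  have "mapply M (mapply N v) i = (\<Sum>j\<in>UNIV. \<Sum>k\<in>UNIV. M i j * N j k * v k)"
    unfolding mapply_def by (simp add: sum_distrib_left mult.assoc)
  also have "\<dots> = (\<Sum>k\<in>UNIV. \<Sum>j\<in>UNIV. M i j * N j k * v k)"
    by (rule sum.swap)
  also have "\<dots> = mapply (mmult M N) v i"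
    unfolding mapply_def mmult_def sum_distrib_right ..
  finally show "mapply M (mapply N v) i = mapply (mmult M N) v i" .
qed

lemma mapply_idmat: "mapply idmat v = v"
proof
  fix i
  have "(\<Sum>j\<in>UNIV. (if i = j then 1 else 0) * v j) = (\<Sum>j\<in>UNIV. if i = j then v j else 0)"
    by (intro sum.cong) auto
  then show "mapply idmat v i = v i"
    unfolding mapply_def idmat_def by simp
qed

lemma vnorm2_mapply_unitary: "unitary U \<Longrightarrow> vnorm2 (mapply U v) = vnorm2 v"
  using cinner_self[of "mapply U v"] cinner_self[of v]
  by (simp add: cinner_mapply mapply_mapply unitary_def mapply_idmat)

lemma vnorm2_run: "qa_wf A \<Longrightarrow> vnorm2 (run A w n) = 1"
  by (induction n) (simp_all add: run_0 run_Suc qa_wf_def vnorm2_mapply_unitary)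

lemma run_wdsum: "run (wdsum a A b B) w n = wsum a (run A w n) b (run B w n)"
proof (induction n)
  case 0
  then show ?case by (simp add: run_0 wdsum_def wsum_def)
next
  case (Suc n)
  then show ?case
    by (auto simp: run_Suc mapply_def wdsum_def wsum_def sum_UNIV_Plus sum_distrib_left
        algebra_simps split: sum.split)
qed

lemma run_tprod: "run (tprod A B) w n = tensor (run A w n) (run B w n)"
proof (induction n)
  case 0
  then show ?case by (simp add: run_0 tprod_def tensor_def)
next
  case (Suc n)
  then show ?case
    by (auto simp: run_Suc mapply_def tprod_def tensor_def sum_UNIV_Times sum_product
        algebra_simps split: prod.split)
qed

lemma run_qa_perp: "run (qa_perp A) w = run A w"
  unfolding run_def[abs_def] state_def qa_perp_def by simp

lemma f_ND_eq_ND: "f_ND A w = ND (acc A) (run A w)"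
  unfolding f_ND_def ND_def ..

lemma f_ND_wdsum:
  "f_ND (wdsum a A b B) w = ND (sum_space (acc A) (acc B)) (\<lambda>n. wsum a (run A w n) b (run B w n))"
  unfolding f_ND_eq_ND run_wdsum[abs_def] by (simp add: wdsum_def sum_space_def)

lemma f_ND_tprod:
  "f_ND (tprod A B) w = ND (tensor_space (acc A) (acc B)) (\<lambda>n. tensor (run A w n) (run B w n))"
  unfolding f_ND_eq_ND run_tprod[abs_def] by (simp add: tprod_def tensor_space_def tensor_def)

lemma f_ND_qa_perp: "f_ND (qa_perp A) w = ND (orth_compl (acc A)) (run A w)"
  unfolding f_ND_eq_ND run_qa_perp by (simp add: qa_perp_def)

theorem proposition3:
  fixes A :: "('i::finite, 's::finite) qa" and B :: "('j::finite, 's) qa"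
    and a b :: complex and w :: "nat \<Rightarrow> 's"
  assumes "qa_wf A" and "qa_wf B" and "(cmod a)^2 + (cmod b)^2 = 1"
  shows "((cmod a)^2 * f_ND A w + (cmod b)^2 * f_ND B w \<ge> f_ND (wdsum a A b B) w
       \<and> f_ND (wdsum a A b B) w \<ge> max ((cmod a)^2 * f_ND A w) ((cmod b)^2 * f_ND B w)
       \<and> max ((cmod a)^2 * f_ND A w) ((cmod b)^2 * f_ND B w) \<ge> f_ND (wdsum a A b B) w / 2)
     \<and> f_ND (tprod A B) w \<le> f_ND A w * f_ND B w
     \<and> f_ND A w + f_ND (qa_perp A) w \<ge> 1
     \<and> (f_ND A w + f_ND (qa_perp A) w = 1 \<longleftrightarrow> convergent (\<lambda>n. f_MO A (prefix w n)))"
proof -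
  have sA: "\<And>n. vnorm2 (run A w n) = 1" and sB: "\<And>n. vnorm2 (run B w n) = 1"
    using vnorm2_run assms(1,2) by blast+
  then have sA': "\<And>n. vnorm2 (run A w n) \<le> 1" and sB': "\<And>n. vnorm2 (run B w n) \<le> 1"
    by simp_all
  have FA: "csubspace (acc A)" and FB: "csubspace (acc B)"
    using assms(1,2) by (simp_all add: qa_wf_def)
  have MO: "(\<lambda>n. f_MO A (prefix w n)) = (\<lambda>n. vnorm2 (proj (acc A) (run A w n)))"
    by (simp add: f_MO_def run_def)
  note sum_le = ND_wsum_le[where sA = "run A w" and sB = "run B w", OF sA' sB' FA FB assms(3)]
    and sum_ge = ND_wsum_ge[where sA = "run A w" and sB = "run B w", OF sA' sB' FA FB assms(3)]
    and tensor_le = ND_tensor_le[where sA = "run A w" and sB = "run B w", OF sA' sB' FA FB]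
    and compl_ge = ND_add_ND_orth_compl_ge[where s = "run A w", OF sA FA]
    and compl_eq = ND_add_ND_orth_compl_eq_1_iff[where s = "run A w", OF sA FA]
  show ?thesis
    unfolding f_ND_wdsum f_ND_tprod f_ND_qa_perp f_ND_eq_ND[of A] f_ND_eq_ND[of B] MO
    using sum_le sum_ge tensor_le compl_ge compl_eq by linarith
qed

end
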